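(* Let $n\ge2$, $0<\alpha_1\le\dots\le\alpha_m$ with $\sum\alpha_j=1$, $(A,\tau)=(\mathbb{C}p_1\oplus\cdots\oplus\mathbb{C}p_m,\tau_1)*(\mathbb{M}_n,tr_n)$ the reduced free product with $\tau_1(p_j)=\alpha_j$, $\{e_{ij}\}$ matrix units of $\mathbb{M}_n$, $u=\sum_{i=1}^{n-1}e_{i,i+1}+e_{n,1}$, $B=C^*(\{u^kp_ju^{-k}:0\le k\le n-1,1\le j\le m\}\cup\{e_{11},\dots,e_{nn}\})$, and for $l\mid n$, $1<l<n$, $E=C^*(\{u^kp_ju^{-k}:0\le k\le l-1,1\le j\le m\}\cup\{e_{11},\dots,e_{nn},u^l,\dots,u^{n-l}\})$. Let $\mathfrak{H}_A$ be the GNS Hilbert space of $\tau$ and $\mathfrak{H}_B,\mathfrak{H}_E\subset\mathfrak{H}_A$ the closures of $B\hat1$, $E\hat1$. Then (1) $u^{k_1}\mathfrak{H}_B\perp u^{k_2}\mathfrak{H}_B$ for $k_1\ne k_2$, $0\le k_1,k_2\le n-1$; (2) $u^{k_1}\mathfrak{H}_E\perp u^{k_2}\mathfrak{H}_E$ for $k_1\ne k_2$, $0\le k_1,k_2\le l-1$.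
   Context: Reduced free product: the unique unital $C^*$-algebra with state generated by unital copies of the factors, restricting to the given traces, in which they are free, with faithful GNS representation; $\tau$ is a faithful trace, and $\hat a\in\mathfrak{H}_A$ denotes the GNS vector of $a\in A$. *)

theory Defs
  imports Complex_Main
begin

text \<open>The underlying real Banach algebra carries a central
  element ii with ii*ii = -1 giving the complex structure (c x = (Re c + Im c ii) x),
  an involution cstar (conjugate linear, anti-multiplicative) and the C*-identity.\<close>

class cstar_algebra = real_normed_algebra_1 + banach +
  fixes cstar :: "'a \<Rightarrow> 'a"
    and ii :: 'a
  assumes ii_sq: "ii * ii = - 1"
    and ii_central: "ii * x = x * ii"
    and norm_scaleC: "norm ((Re c *\<^sub>R 1 + Im c *\<^sub>R ii) * x) = cmod c * norm x"
    and cstar_cstar: "cstar (cstar x) = x"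
    and cstar_add: "cstar (x + y) = cstar x + cstar y"
    and cstar_scaleR: "cstar (r *\<^sub>R x) = r *\<^sub>R cstar x"
    and cstar_ii: "cstar ii = - ii"
    and cstar_mult: "cstar (x * y) = cstar y * cstar x"
    and cstar_identity: "norm (cstar x * x) = norm x ^ 2"

definition scaleC :: "complex \<Rightarrow> 'a::cstar_algebra \<Rightarrow> 'a" where
  "scaleC c x = (Re c *\<^sub>R 1 + Im c *\<^sub>R ii) * x"

definition faithful_tracial_state :: "('a::cstar_algebra \<Rightarrow> complex) \<Rightarrow> bool" where
  "faithful_tracial_state tau \<longleftrightarrow>
     (\<forall>x y. tau (x + y) = tau x + tau y) \<and>
     (\<forall>c x. tau (scaleC c x) = c * tau x) \<and>
     (\<forall>x. Im (tau (cstar x * x)) = 0 \<and> Re (tau (cstar x * x)) \<ge> 0) \<and>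
     tau 1 = 1 \<and>
     (\<forall>x. tau (cstar x * x) = 0 \<longrightarrow> x = 0) \<and>
     (\<forall>x y. tau (x * y) = tau (y * x))"

definition cstar_subalg :: "'a::cstar_algebra set \<Rightarrow> bool" where
  "cstar_subalg T \<longleftrightarrow> 0 \<in> T \<and> (\<forall>x\<in>T. \<forall>y\<in>T. x + y \<in> T \<and> x * y \<in> T) \<and>
     (\<forall>c. \<forall>x\<in>T. scaleC c x \<in> T) \<and> (\<forall>x\<in>T. cstar x \<in> T) \<and> closed T"

definition cstar_gen :: "'a::cstar_algebra set \<Rightarrow> 'a set" where
  "cstar_gen S = \<Inter>{T. S \<subseteq> T \<and> cstar_subalg T}"

definition free_pair :: "('a::cstar_algebra \<Rightarrow> complex) \<Rightarrow> 'a set \<Rightarrow> 'a set \<Rightarrow> bool" where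
  "free_pair tau D1 D2 \<longleftrightarrow>
     (\<forall>xs :: (bool \<times> 'a) list. xs \<noteq> [] \<longrightarrow>
        (\<forall>(b, a) \<in> set xs. a \<in> (if b then D1 else D2) \<and> tau a = 0) \<longrightarrow>
        (\<forall>i. Suc i < length xs \<longrightarrow> fst (xs ! i) \<noteq> fst (xs ! Suc i)) \<longrightarrow>
        tau (prod_list (map snd xs)) = 0)"

text \<open>GNS Hilbert space of tau: completion of A w.r.t. <x,y> = tau(y* x).
  A vector of the closure of S\<hat>1 is represented by a 2-norm Cauchy sequence in S.\<close>
definition gns_norm :: "('a::cstar_algebra \<Rightarrow> complex) \<Rightarrow> 'a \<Rightarrow> real" where
  "gns_norm tau x = sqrt (Re (tau (cstar x * x)))"

definition gns_cauchy :: "('a::cstar_algebra \<Rightarrow> complex) \<Rightarrow> (nat \<Rightarrow> 'a) \<Rightarrow> bool" where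
  "gns_cauchy tau X \<longleftrightarrow> (\<forall>\<epsilon>>0. \<exists>N. \<forall>i\<ge>N. \<forall>j\<ge>N. gns_norm tau (X i - X j) < \<epsilon>)"

text \<open>a (closure of S\<hat>1) is orthogonal to b (closure of T\<hat>1) in the GNS space,
  a, b acting by (the continuous extension of) left multiplication.\<close>
definition gns_perp ::
  "('a::cstar_algebra \<Rightarrow> complex) \<Rightarrow> 'a \<Rightarrow> 'a set \<Rightarrow> 'a \<Rightarrow> 'a set \<Rightarrow> bool" where
  "gns_perp tau a S b T \<longleftrightarrow>
     (\<forall>X Y. range X \<subseteq> S \<longrightarrow> range Y \<subseteq> T \<longrightarrow> gns_cauchy tau X \<longrightarrow> gns_cauchy tau Y \<longrightarrow>
        (\<lambda>i. tau (cstar (b * Y i) * (a * X i))) \<longlonglongrightarrow> 0)"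

definition cyc_shift :: "nat \<Rightarrow> (nat \<Rightarrow> nat \<Rightarrow> 'a::cstar_algebra) \<Rightarrow> 'a" where
  "cyc_shift n e = (\<Sum>i=1..n-1. e i (Suc i)) + e n 1"

end

theory Submission
  imports Defs "HOL-Analysis.Analysis"
begin

(* Grade the free product by Z/nZ: p j has degree 0 and the matrix unit e i j has degree i - j,
   so u has degree -1 and the generators of B have degree 0.  Freeness makes tau vanish on
   every word of nonzero degree: letters of nonzero trace have degree 0 and can be centred,
   neighbouring letters from the same factor can be merged, and a centred alternating word
   has trace 0.  Since states are bounded, tau also vanishes on the norm closure of the span of
   the elements of degree r whenever the modulus q (a divisor of n) does not divide r.  For x, y
   in B the element (u^k2 y)^* u^k1 x has degree k2 - k1, so the inner product of u^k1 x and
   u^k2 y is 0.  For E the same argument works modulo l, since u^(l t) has degree 0 mod l. *)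

section \<open>Complex scalars and the involution\<close>

definition of_complex :: "complex \<Rightarrow> 'a::cstar_algebra" where
  "of_complex c = Re c *\<^sub>R 1 + Im c *\<^sub>R ii"

lemma scaleC_eq_of_complex_mult: "scaleC c x = of_complex c * x"
  by (simp add: scaleC_def of_complex_def)

lemma of_complex_commute: "of_complex c * x = x * (of_complex c :: 'a::cstar_algebra)"
  by (simp add: of_complex_def algebra_simps ii_central)

lemma of_complex_mult: "of_complex (a * b) = (of_complex a * of_complex b :: 'a::cstar_algebra)"
  by (simp add: of_complex_def algebra_simps ii_sq scaleR_add_left[symmetric] del: scaleR_add_left)

lemma of_complex_add: "of_complex (a + b) = (of_complex a + of_complex b :: 'a::cstar_algebra)"
  by (simp add: of_complex_def algebra_simps)

lemma of_complex_diff: "of_complex (a - b) = (of_complex a - of_complex b :: 'a::cstar_algebra)"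
  by (simp add: of_complex_def algebra_simps)

lemma of_complex_sum: "of_complex (sum f A) = (\<Sum>i\<in>A. of_complex (f i) :: 'a::cstar_algebra)"
  by (induction A rule: infinite_finite_induct) (simp_all add: of_complex_add of_complex_def[of 0])

lemma cstar_zero [simp]: "cstar 0 = (0::'a::cstar_algebra)"
  using cstar_scaleR[of 0 "0::'a"] by simp

lemma cstar_minus: "cstar (- x) = - cstar (x::'a::cstar_algebra)"
  using cstar_scaleR[of "-1" x] by simp

lemma cstar_diff: "cstar (x - y) = cstar x - cstar (y::'a::cstar_algebra)"
  using cstar_add[of x "- y"] by (simp add: cstar_minus)

lemma cstar_sum: "cstar (sum f A) = (\<Sum>i\<in>A. cstar (f i) :: 'a::cstar_algebra)"
  by (induction A rule: infinite_finite_induct) (auto simp: cstar_add)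

lemma cstar_one [simp]: "cstar 1 = (1::'a::cstar_algebra)"
  using cstar_mult[of "cstar 1" 1] by (simp add: cstar_cstar)

lemma cstar_power: "cstar (x ^ k) = cstar x ^ k" for x :: "'a::cstar_algebra"
  by (induction k) (auto simp: cstar_mult power_commutes)

lemma cstar_of_complex: "cstar (of_complex c) = (of_complex (cnj c) :: 'a::cstar_algebra)"
  by (simp add: of_complex_def cstar_add cstar_scaleR cstar_ii)

lemma cstar_scaleC: "cstar (scaleC c x) = scaleC (cnj c) (cstar (x::'a::cstar_algebra))"
  by (simp add: scaleC_eq_of_complex_mult cstar_mult cstar_of_complex of_complex_commute)

lemma norm_cstar [simp]: "norm (cstar x) = norm (x::'a::cstar_algebra)"
proof -
  have le: "norm y \<le> norm (cstar y)" for y :: 'a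
  proof (cases "y = 0")
    case False
    have "norm y * norm y = norm (cstar y * y)" by (simp add: cstar_identity power2_eq_square)
    also have "\<dots> \<le> norm (cstar y) * norm y" by (rule norm_mult_ineq)
    finally show ?thesis using False by simp
  qed simp
  show ?thesis using le[of x] le[of "cstar x"] by (simp add: cstar_cstar)
qed

lemma bounded_linear_cstar: "bounded_linear (cstar :: 'a::cstar_algebra \<Rightarrow> 'a)"
  by (rule bounded_linear_intro[where K=1]) (auto simp: cstar_add cstar_scaleR)

lemma scaleC_mult_left: "scaleC c x * y = scaleC c (x * y)" for x :: "'a::cstar_algebra"
  by (simp add: scaleC_eq_of_complex_mult mult.assoc)

lemma scaleC_mult_right: "x * scaleC c y = scaleC c (x * y)" for x :: "'a::cstar_algebra"
  by (metis scaleC_eq_of_complex_mult of_complex_commute mult.assoc)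

lemma scaleC_scaleC: "scaleC a (scaleC b x) = scaleC (a * b) (x::'a::cstar_algebra)"
  by (simp add: scaleC_eq_of_complex_mult of_complex_mult mult.assoc)

lemma scaleC_diff_left: "scaleC (a - b) x = scaleC a x - scaleC b (x::'a::cstar_algebra)"
  by (simp add: scaleC_eq_of_complex_mult of_complex_diff left_diff_distrib)

lemma scaleC_sum_left: "scaleC (sum f A) x = (\<Sum>i\<in>A. scaleC (f i) x :: 'a::cstar_algebra)"
  by (simp add: scaleC_eq_of_complex_mult of_complex_sum sum_distrib_right)

lemma scaleC_sum_right: "scaleC c (sum f A) = (\<Sum>i\<in>A. scaleC c (f i) :: 'a::cstar_algebra)"
  by (simp add: scaleC_eq_of_complex_mult sum_distrib_left)

lemma scaleC_one [simp]: "scaleC 1 x = (x::'a::cstar_algebra)"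
  by (simp add: scaleC_eq_of_complex_mult of_complex_def)

lemma scaleC_zero [simp]: "scaleC 0 x = (0::'a::cstar_algebra)"
  by (simp add: scaleC_eq_of_complex_mult of_complex_def)

lemma scaleC_zero_right [simp]: "scaleC c 0 = (0::'a::cstar_algebra)"
  by (simp add: scaleC_eq_of_complex_mult)

lemma scaleC_of_real: "scaleC (of_real r) x = r *\<^sub>R (x::'a::cstar_algebra)"
  by (simp add: scaleC_eq_of_complex_mult of_complex_def)

lemma norm_scaleC_eq: "norm (scaleC c x) = cmod c * norm (x::'a::cstar_algebra)"
  by (simp add: scaleC_def norm_scaleC)

lemma sum_scaleC_mult_sum_scaleC:
  fixes x y :: "'i \<Rightarrow> 'a::cstar_algebra"
  shows "(\<Sum>j\<in>A. scaleC (c j) (x j)) * (\<Sum>k\<in>B. scaleC (d k) (y k)) =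
         (\<Sum>j\<in>A. \<Sum>k\<in>B. scaleC (c j * d k) (x j * y k))"
  by (simp only: sum_product scaleC_mult_left scaleC_mult_right scaleC_scaleC) (simp add: mult.commute)

lemma continuous_on_scaleC: "continuous_on UNIV (scaleC c :: 'a::cstar_algebra \<Rightarrow> 'a)"
  unfolding scaleC_eq_of_complex_mult[abs_def] by (intro continuous_intros)

lemma closure_closed_under_unop:
  fixes f :: "'a::topological_space \<Rightarrow> 'b::topological_space"
  assumes "continuous_on UNIV f" "\<And>x. x \<in> A \<Longrightarrow> f x \<in> B" "x \<in> closure A"
  shows "f x \<in> closure B"
proof -
  have "f ` A \<subseteq> closure B"
    using assms(2) closure_subset by blast
  then have "f ` closure A \<subseteq> closure B"
    using image_closure_subset continuous_on_subset[OF assms(1) subset_UNIV] closed_closure by blast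
  then show ?thesis
    using assms(3) by blast
qed

lemma closure_closed_under_binop:
  fixes f :: "'a::metric_space \<Rightarrow> 'b::metric_space \<Rightarrow> 'c::topological_space"
  assumes "continuous_on UNIV (\<lambda>z. f (fst z) (snd z))"
    and "\<And>x y. x \<in> A \<Longrightarrow> y \<in> B \<Longrightarrow> f x y \<in> C"
    and "x \<in> closure A" "y \<in> closure B"
  shows "f x y \<in> closure C"
proof -
  have "(\<lambda>z. f (fst z) (snd z)) (x, y) \<in> closure C"
    by (rule closure_closed_under_unop[OF assms(1), of "A \<times> B"])
      (use assms(2-4) in \<open>auto simp: closure_Times\<close>)
  then show ?thesis by simp
qed

section \<open>Square roots and boundedness of states\<close>

lemma summable_norm_half_binomial_series:
  fixes g :: "'a::real_normed_algebra_1"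
  assumes "norm g < 1"
  shows "summable (\<lambda>k. norm (((1/2::real) gchoose k) *\<^sub>R g ^ k))"
proof -
  have "(1/2::real) \<notin> \<nat>"
  proof
    assume "(1/2::real) \<in> \<nat>"
    then obtain k :: nat where "1/2 = real k" by (auto elim: Nats_cases)
    then have "real (2 * k) = 1" by simp
    then have "2 * k = 1" by linarith
    then show False by presburger
  qed
  then have "conv_radius (\<lambda>k. (1/2::real) gchoose k) = 1"
    by (simp add: conv_radius_gchoose)
  then have "summable (\<lambda>k. norm (((1/2::real) gchoose k) * norm g ^ k))"
    using assms by (intro abs_summable_in_conv_radius) simp
  then show ?thesis
    by (rule summable_comparison_test[rotated])
      (auto intro!: exI[of _ 0] mult_left_mono norm_power_ineq simp: abs_mult)
qed

lemma half_binomial_series_square: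
  fixes g :: "'a::{real_normed_algebra_1, banach}"
  assumes "norm g < 1"
  defines "s \<equiv> \<Sum>k. ((1/2::real) gchoose k) *\<^sub>R g ^ k"
  shows "s * s = 1 + g"
proof -
  let ?a = "\<lambda>k. ((1/2::real) gchoose k) *\<^sub>R g ^ k"
  have sa: "summable (\<lambda>k. norm (?a k))"
    by (rule summable_norm_half_binomial_series[OF assms(1)])
  have "s * s = (\<Sum>k. \<Sum>i\<le>k. ?a i * ?a (k - i))"
    unfolding s_def by (rule Cauchy_product[OF sa sa])
  also have "(\<lambda>k. \<Sum>i\<le>k. ?a i * ?a (k - i)) = (\<lambda>k. ((1::real) gchoose k) *\<^sub>R g ^ k)"
  proof
    fix k :: nat
    have "(\<Sum>i\<le>k. ?a i * ?a (k - i)) = (\<Sum>i\<le>k. ((1/2) gchoose i) * ((1/2) gchoose (k - i))) *\<^sub>R g ^ k"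
      by (auto simp: scaleR_sum_left power_add[symmetric] intro!: sum.cong)
    also have "(\<Sum>i\<le>k. ((1/2::real) gchoose i) * ((1/2) gchoose (k - i))) = 1 gchoose k"
      using gbinomial_Vandermonde[of "1/2::real" "1/2" k] by (simp add: atMost_atLeast0)
    finally show "(\<Sum>i\<le>k. ?a i * ?a (k - i)) = ((1::real) gchoose k) *\<^sub>R g ^ k" .
  qed
  also have "(\<Sum>k. ((1::real) gchoose k) *\<^sub>R g ^ k) = (\<Sum>k\<in>{0,1}. ((1::real) gchoose k) *\<^sub>R g ^ k)"
  proof (rule suminf_finite)
    fix k :: nat
    assume "k \<notin> {0, 1}"
    then have "(1 choose k) = 0" by (simp add: binomial_eq_0)
    then show "((1::real) gchoose k) *\<^sub>R g ^ k = 0"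
      by (metis binomial_gbinomial of_nat_0 of_nat_1 scale_zero_left)
  qed simp
  finally show ?thesis by simp
qed

lemma selfadjoint_sqrt_one_minus:
  fixes h :: "'a::cstar_algebra"
  assumes "cstar h = h" "norm h < 1"
  obtains s where "cstar s = s" "s * s = 1 - h"
proof
  let ?a = "\<lambda>k. ((1/2::real) gchoose k) *\<^sub>R (- h) ^ k"
  have "summable ?a"
    using summable_norm_half_binomial_series[of "- h"] assms(2) by (simp add: summable_norm_cancel)
  then have "cstar (suminf ?a) = (\<Sum>k. cstar (?a k))"
    by (rule bounded_linear.suminf[OF bounded_linear_cstar])
  also have "(\<lambda>k. cstar (?a k)) = ?a"
    using assms(1) by (simp add: cstar_scaleR cstar_power cstar_minus)
  finally show "cstar (suminf ?a) = suminf ?a" .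
  show "suminf ?a * suminf ?a = 1 - h"
    using half_binomial_series_square[of "- h"] assms(2) by simp
qed

locale cstar_state =
  fixes tau :: "'a::cstar_algebra \<Rightarrow> complex"
  assumes tau_add: "tau (x + y) = tau x + tau y"
    and tau_scaleC: "tau (scaleC c x) = c * tau x"
    and tau_positive_Im: "Im (tau (cstar x * x)) = 0"
    and tau_positive_Re: "Re (tau (cstar x * x)) \<ge> 0"
    and tau_one [simp]: "tau 1 = 1"
begin

lemma tau_zero [simp]: "tau 0 = 0"
  using tau_scaleC[of 0 0] by simp

lemma tau_diff: "tau (x - y) = tau x - tau y"
  using tau_add[of "x - y" y] by simp

lemma tau_sum: "tau (sum f A) = (\<Sum>i\<in>A. tau (f i))"
  by (induction A rule: infinite_finite_induct) (auto simp: tau_add)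

lemma tau_scaleR: "tau (r *\<^sub>R x) = of_real r * tau x"
  using tau_scaleC[of "of_real r" x] by (simp add: scaleC_of_real)

lemma tau_selfadjoint_real:
  assumes "cstar h = h"
  shows "Im (tau h) = 0"
proof -
  have "cstar (1 + h) * (1 + h) = 1 + h + h + cstar h * h"
    using assms by (simp add: cstar_add algebra_simps)
  then have "Im (tau (cstar (1 + h) * (1 + h))) = 2 * Im (tau h) + Im (tau (cstar h * h))"
    by (simp add: tau_add)
  then show ?thesis using tau_positive_Im[of "1 + h"] tau_positive_Im[of h] by simp
qed

text \<open>Positivity of tau at the square root of 1 - h/r, for every r > norm h.\<close>
lemma tau_selfadjoint_le_norm:
  assumes "cstar h = h"
  shows "Re (tau h) \<le> norm h"
proof (rule dense_ge)
  fix r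
  assume r: "norm h < r"
  then have "r > 0" using norm_ge_zero[of h] by linarith
  have "cstar ((1/r) *\<^sub>R h) = (1/r) *\<^sub>R h" "norm ((1/r) *\<^sub>R h) < 1"
    using assms r \<open>r > 0\<close> by (simp_all add: cstar_scaleR field_simps)
  then obtain s where "cstar s = s" "s * s = 1 - (1/r) *\<^sub>R h"
    by (rule selfadjoint_sqrt_one_minus)
  then have "Re (tau (cstar s * s)) = 1 - Re (tau h) / r"
    by (simp add: tau_diff tau_scaleR)
  then have "Re (tau h) / r \<le> 1"
    using tau_positive_Re[of s] by simp
  then show "Re (tau h) \<le> r"
    using \<open>r > 0\<close> by (simp add: field_simps)
qed

lemma norm_tau_selfadjoint_le:
  assumes "cstar h = h"
  shows "cmod (tau h) \<le> norm h"
proof -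
  have "Re (tau (- h)) \<le> norm (- h)"
    using assms by (intro tau_selfadjoint_le_norm) (simp add: cstar_minus)
  then have "\<bar>Re (tau h)\<bar> \<le> norm h"
    using tau_selfadjoint_le_norm[OF assms] tau_diff[of 0 h] by simp
  then show ?thesis using tau_selfadjoint_real[OF assms] by (simp add: cmod_eq_Re)
qed

lemma norm_tau_le: "cmod (tau x) \<le> 2 * norm x"
proof -
  define h where "h = (1/2::real) *\<^sub>R (x + cstar x)"
  define k where "k = scaleC (- \<i>/2) (x - cstar x)"
  have h_sa: "cstar h = h"
    by (simp add: h_def cstar_scaleR cstar_add cstar_cstar add.commute)
  have "cstar k = scaleC (- (- \<i>/2)) (- (x - cstar x))"
    by (simp add: k_def cstar_scaleC cstar_diff cstar_cstar)
  then have k_sa: "cstar k = k"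
    by (simp add: k_def scaleC_eq_of_complex_mult of_complex_def algebra_simps)
  have "norm h \<le> norm x"
    using norm_triangle_ineq[of x "cstar x"] by (simp add: h_def)
  moreover have "norm k \<le> norm x"
    using norm_triangle_ineq4[of x "cstar x"] by (simp add: k_def norm_scaleC_eq norm_divide)
  moreover have "scaleC \<i> k = (1/2::real) *\<^sub>R (x - cstar x)"
    by (simp add: k_def scaleC_scaleC flip: scaleC_of_real)
  then have "h + scaleC \<i> k = (1/2::real) *\<^sub>R x + (1/2::real) *\<^sub>R x"
    by (simp add: h_def algebra_simps)
  then have "x = h + scaleC \<i> k"
    by (simp flip: scaleR_add_left)
  then have "cmod (tau x) \<le> cmod (tau h) + cmod (tau k)"
    by (metis tau_add tau_scaleC norm_triangle_ineq norm_mult norm_ii mult_1)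
  ultimately show ?thesis
    using norm_tau_selfadjoint_le[OF h_sa] norm_tau_selfadjoint_le[OF k_sa] by linarith
qed

lemma bounded_linear_tau: "bounded_linear tau"
proof (rule bounded_linear_intro[where K=2])
  show "cmod (tau x) \<le> norm x * 2" for x
    using norm_tau_le[of x] by (simp add: mult.commute)
  show "tau (r *\<^sub>R x) = r *\<^sub>R tau x" for r x
    using tau_scaleR[of r x] by (simp add: scaleR_conv_of_real)
qed (rule tau_add)

lemma tau_vanishes_on_closure:
  assumes "\<And>y. y \<in> S \<Longrightarrow> tau y = 0" "x \<in> closure S"
  shows "tau x = 0"
  using closure_closed_under_unop[of tau S "{0}" x] assms
    linear_continuous_on[OF bounded_linear_tau] by simp

end

section \<open>The grading of the free product\<close>

lemma faithful_tracial_state_imp_cstar_state: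
  "faithful_tracial_state tau \<Longrightarrow> cstar_state tau"
  unfolding faithful_tracial_state_def cstar_state_def by auto

locale free_product_Cm_Mn = cstar_state tau for tau :: "'a::cstar_algebra \<Rightarrow> complex" +
  fixes n m :: nat and p :: "nat \<Rightarrow> 'a" and e :: "nat \<Rightarrow> nat \<Rightarrow> 'a"
  assumes n_pos: "n > 0"
    and p_proj: "\<forall>j\<in>{1..m}. p j * p j = p j \<and> cstar (p j) = p j"
    and p_orth: "\<forall>j\<in>{1..m}. \<forall>k\<in>{1..m}. j \<noteq> k \<longrightarrow> p j * p k = 0"
    and p_sum: "(\<Sum>j=1..m. p j) = 1"
    and e_mult: "\<forall>i\<in>{1..n}. \<forall>j\<in>{1..n}. \<forall>k\<in>{1..n}. \<forall>l\<in>{1..n}.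
                   e i j * e k l = (if j = k then e i l else 0)"
    and e_adj: "\<forall>i\<in>{1..n}. \<forall>j\<in>{1..n}. cstar (e i j) = e j i"
    and e_sum: "(\<Sum>i=1..n. e i i) = 1"
    and tau_e_offdiag: "\<forall>i\<in>{1..n}. \<forall>j\<in>{1..n}. i \<noteq> j \<longrightarrow> tau (e i j) = 0"
    and free: "free_pair tau {\<Sum>j=1..m. scaleC (c j) (p j) | c. True}
                            {\<Sum>i=1..n. \<Sum>j=1..n. scaleC (c i j) (e i j) | c. True}"
begin

definition proj_span :: "'a set" where
  "proj_span = {\<Sum>j=1..m. scaleC (c j) (p j) | c. True}"

lemma proj_spanI: "(\<Sum>j=1..m. scaleC (c j) (p j)) \<in> proj_span"
  unfolding proj_span_def by blast

lemma proj_span_mult: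
  assumes "x \<in> proj_span" "y \<in> proj_span"
  shows "x * y \<in> proj_span"
proof -
  obtain c d where x: "x = (\<Sum>j=1..m. scaleC (c j) (p j))" and y: "y = (\<Sum>j=1..m. scaleC (d j) (p j))"
    using assms by (auto simp: proj_span_def)
  have "x * y = (\<Sum>j=1..m. \<Sum>k=1..m. scaleC (c j * d k) (p j * p k))"
    unfolding x y by (rule sum_scaleC_mult_sum_scaleC)
  also have "\<dots> = (\<Sum>j=1..m. scaleC (c j * d j) (p j))"
  proof (rule sum.cong[OF refl])
    fix j
    assume j: "j \<in> {1..m}"
    have "(\<Sum>k=1..m. scaleC (c j * d k) (p j * p k))
        = (\<Sum>k=1..m. if k = j then scaleC (c j * d j) (p j) else 0)"
      using j p_proj p_orth by (intro sum.cong) auto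
    then show "(\<Sum>k=1..m. scaleC (c j * d k) (p j * p k)) = scaleC (c j * d j) (p j)"
      using j by (simp add: sum.delta)
  qed
  finally show ?thesis by (simp only: proj_spanI)
qed

lemma proj_span_diff_scalar:
  assumes "x \<in> proj_span"
  shows "x - scaleC t 1 \<in> proj_span"
proof -
  obtain c where x: "x = (\<Sum>j=1..m. scaleC (c j) (p j))"
    using assms by (auto simp: proj_span_def)
  have "x - scaleC t 1 = (\<Sum>j=1..m. scaleC (c j - t) (p j))"
    unfolding x p_sum[symmetric] by (simp add: scaleC_sum_right scaleC_diff_left sum_subtractf)
  then show ?thesis by (simp only: proj_spanI)
qed

lemma cstar_proj_span:
  assumes "x \<in> proj_span"
  shows "cstar x \<in> proj_span"
proof -
  obtain c where x: "x = (\<Sum>j=1..m. scaleC (c j) (p j))"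
    using assms by (auto simp: proj_span_def)
  have "cstar x = (\<Sum>j=1..m. scaleC (cnj (c j)) (p j))"
    unfolding x using p_proj by (simp add: cstar_sum cstar_scaleC)
  then show ?thesis by (simp only: proj_spanI)
qed

lemma proj_in_proj_span:
  assumes "j \<in> {1..m}"
  shows "p j \<in> proj_span"
proof -
  have "p j = (\<Sum>k=1..m. scaleC (if k = j then 1 else 0) (p k))"
    using assms by (simp add: if_distrib[of "\<lambda>c. scaleC c _"] sum.delta cong: if_cong)
  then show ?thesis by (simp only: proj_spanI)
qed

definition mat_comb :: "(nat \<Rightarrow> nat \<Rightarrow> complex) \<Rightarrow> 'a" where
  "mat_comb c = (\<Sum>i=1..n. \<Sum>j=1..n. scaleC (c i j) (e i j))"

lemma matrix_unit_mult_mat_comb: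
  assumes "i \<in> {1..n}" "j \<in> {1..n}"
  shows "e i j * mat_comb c = (\<Sum>l=1..n. scaleC (c j l) (e i l))"
proof -
  have "e i j * mat_comb c = (\<Sum>k=1..n. \<Sum>l=1..n. scaleC (c k l) (e i j * e k l))"
    by (simp only: mat_comb_def sum_distrib_left scaleC_mult_right)
  also have "\<dots> = (\<Sum>k=1..n. if k = j then (\<Sum>l=1..n. scaleC (c j l) (e i l)) else 0)"
    using assms e_mult by (intro sum.cong refl) auto
  finally show ?thesis
    using assms by (simp add: sum.delta')
qed

lemma mat_comb_mult: "mat_comb c * mat_comb c' = mat_comb (\<lambda>i l. \<Sum>j=1..n. c i j * c' j l)"
proof -
  have "mat_comb c * mat_comb c' = (\<Sum>i=1..n. \<Sum>j=1..n. \<Sum>l=1..n. scaleC (c i j * c' j l) (e i l))"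
    unfolding mat_comb_def[of c] sum_distrib_right scaleC_mult_left
    by (intro sum.cong refl) (simp add: matrix_unit_mult_mat_comb scaleC_sum_right scaleC_scaleC)
  also have "\<dots> = (\<Sum>i=1..n. \<Sum>l=1..n. \<Sum>j=1..n. scaleC (c i j * c' j l) (e i l))"
    by (intro sum.cong refl sum.swap)
  finally show ?thesis
    by (simp only: mat_comb_def scaleC_sum_left)
qed

lemma cstar_mat_comb: "cstar (mat_comb c) = mat_comb (\<lambda>i j. cnj (c j i))"
proof -
  have "cstar (mat_comb c) = (\<Sum>i=1..n. \<Sum>j=1..n. scaleC (cnj (c i j)) (e j i))"
    using e_adj by (simp add: mat_comb_def cstar_sum cstar_scaleC)
  also have "\<dots> = (\<Sum>j=1..n. \<Sum>i=1..n. scaleC (cnj (c i j)) (e j i))"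
    by (rule sum.swap)
  finally show ?thesis
    by (simp add: mat_comb_def)
qed

lemma mat_comb_diff: "mat_comb c - mat_comb c' = mat_comb (\<lambda>i j. c i j - c' i j)"
  by (simp add: mat_comb_def scaleC_diff_left sum_subtractf)

lemma scaleC_mat_comb: "scaleC t (mat_comb c) = mat_comb (\<lambda>i j. t * c i j)"
  by (simp add: mat_comb_def scaleC_sum_right scaleC_scaleC)

lemma mat_comb_matrix_unit:
  assumes "i \<in> {1..n}" "j \<in> {1..n}"
  shows "mat_comb (\<lambda>a b. if a = i \<and> b = j then 1 else 0) = e i j"
proof -
  have "mat_comb (\<lambda>a b. if a = i \<and> b = j then 1 else 0) = (\<Sum>a=1..n. if a = i then e i j else 0)"
    unfolding mat_comb_def using assms(2)
    by (intro sum.cong refl) (auto simp: if_distrib[of "\<lambda>c. scaleC c _"] sum.delta' cong: if_cong)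
  then show ?thesis
    using assms(1) by (simp add: sum.delta')
qed

lemma one_eq_mat_comb: "1 = mat_comb (\<lambda>i j. if i = j then 1 else 0)"
  unfolding e_sum[symmetric] mat_comb_def
  by (intro sum.cong refl) (simp add: if_distrib[of "\<lambda>c. scaleC c _"] sum.delta cong: if_cong)

lemma tau_mat_comb: "tau (mat_comb c) = (\<Sum>i=1..n. c i i * tau (e i i))"
proof -
  have "tau (mat_comb c) = (\<Sum>i=1..n. \<Sum>j=1..n. c i j * tau (e i j))"
    by (simp add: mat_comb_def tau_sum tau_scaleC)
  also have "\<dots> = (\<Sum>i=1..n. \<Sum>j=1..n. if j = i then c i i * tau (e i i) else 0)"
    using tau_e_offdiag by (intro sum.cong refl) auto
  finally show ?thesis by simp
qed

definition matrix_deg :: "int \<Rightarrow> 'a set" where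
  "matrix_deg d = {mat_comb c | c. \<forall>i j. c i j \<noteq> 0 \<longrightarrow> int n dvd (int i - int j - d)}"

lemma matrix_degI:
  "(\<And>i j. c i j \<noteq> 0 \<Longrightarrow> int n dvd (int i - int j - d)) \<Longrightarrow> mat_comb c \<in> matrix_deg d"
  unfolding matrix_deg_def by blast

lemma matrix_deg_mult:
  assumes "x \<in> matrix_deg d" "y \<in> matrix_deg d'"
  shows "x * y \<in> matrix_deg (d + d')"
proof -
  obtain c c' where x: "x = mat_comb c" and c: "\<forall>i j. c i j \<noteq> 0 \<longrightarrow> int n dvd (int i - int j - d)"
    and y: "y = mat_comb c'" and c': "\<forall>i j. c' i j \<noteq> 0 \<longrightarrow> int n dvd (int i - int j - d')"
    using assms by (auto simp: matrix_deg_def)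
  show ?thesis
    unfolding x y mat_comb_mult
  proof (rule matrix_degI)
    fix i l
    assume "(\<Sum>j=1..n. c i j * c' j l) \<noteq> 0"
    then obtain j where "c i j * c' j l \<noteq> 0"
      by (rule sum.not_neutral_contains_not_neutral)
    then have "int n dvd (int i - int j - d)" "int n dvd (int j - int l - d')"
      using c c' by auto
    then have "int n dvd (int i - int j - d) + (int j - int l - d')" by (rule dvd_add)
    then show "int n dvd (int i - int l - (d + d'))" by (simp add: algebra_simps)
  qed
qed

lemma cstar_matrix_deg:
  assumes "x \<in> matrix_deg d"
  shows "cstar x \<in> matrix_deg (- d)"
proof -
  obtain c where x: "x = mat_comb c" and c: "\<forall>i j. c i j \<noteq> 0 \<longrightarrow> int n dvd (int i - int j - d)"
    using assms by (auto simp: matrix_deg_def)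
  show ?thesis
    unfolding x cstar_mat_comb
  proof (rule matrix_degI)
    fix i j
    assume "cnj (c j i) \<noteq> 0"
    then have "int n dvd (int j - int i - d)" using c by simp
    moreover have "int i - int j - - d = - (int j - int i - d)" by simp
    ultimately show "int n dvd (int i - int j - - d)" by (simp only: dvd_minus_iff)
  qed
qed

lemma matrix_deg_diff_scalar:
  assumes "x \<in> matrix_deg d" "int n dvd d"
  shows "x - scaleC t 1 \<in> matrix_deg d"
proof -
  obtain c where x: "x = mat_comb c" and c: "\<forall>i j. c i j \<noteq> 0 \<longrightarrow> int n dvd (int i - int j - d)"
    using assms(1) by (auto simp: matrix_deg_def)
  show ?thesis
    unfolding x one_eq_mat_comb scaleC_mat_comb mat_comb_diff
    by (rule matrix_degI) (use c assms(2) in \<open>auto split: if_splits\<close>)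
qed

lemma matrix_deg_tau_nonzero:
  assumes "x \<in> matrix_deg d" "tau x \<noteq> 0"
  shows "int n dvd d"
proof -
  obtain c where x: "x = mat_comb c" and c: "\<forall>i j. c i j \<noteq> 0 \<longrightarrow> int n dvd (int i - int j - d)"
    using assms(1) by (auto simp: matrix_deg_def)
  obtain i where "c i i * tau (e i i) \<noteq> 0"
    using assms(2) unfolding x tau_mat_comb by (rule sum.not_neutral_contains_not_neutral)
  then have "c i i \<noteq> 0" by simp
  then have "int n dvd (int i - int i - d)" using c by blast
  then show ?thesis by (simp only: diff_self diff_0 dvd_minus_iff)
qed

lemma matrix_unit_deg:
  assumes "i \<in> {1..n}" "j \<in> {1..n}"
  shows "e i j \<in> matrix_deg (int i - int j)"
  unfolding mat_comb_matrix_unit[OF assms, symmetric]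
  by (rule matrix_degI) (auto split: if_splits)

lemma cyc_shift_deg: "cyc_shift n e \<in> matrix_deg (- 1)"
proof -
  define succ where "succ i = (if i < n then Suc i else 1)" for i
  define c where "c i j = (if i \<in> {1..n} \<and> j = succ i then (1::complex) else 0)" for i j
  have "mat_comb c = (\<Sum>i=1..n. e i (succ i))"
    unfolding mat_comb_def c_def
    by (intro sum.cong refl)
      (auto simp: succ_def if_distrib[of "\<lambda>c. scaleC c _"] sum.delta' cong: if_cong)
  also have "\<dots> = (\<Sum>i=1..n-1. e i (succ i)) + e n (succ n)"
    using n_pos by (subst Suc_pred'[OF n_pos], subst sum.cl_ivl_Suc) auto
  also have "(\<Sum>i=1..n-1. e i (succ i)) = (\<Sum>i=1..n-1. e i (Suc i))"
    by (rule sum.cong) (auto simp: succ_def)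
  finally have "cyc_shift n e = mat_comb c"
    by (simp add: cyc_shift_def succ_def)
  then show ?thesis
    by (simp only:) (rule matrix_degI, auto simp: c_def succ_def split: if_splits)
qed


text \<open>A letter (b, a, d) is an element a of degree d of the first (b) or second (not b) free factor.\<close>
definition graded_letter :: "bool \<Rightarrow> 'a \<Rightarrow> int \<Rightarrow> bool" where
  "graded_letter b a d \<longleftrightarrow> (if b then a \<in> proj_span \<and> d = 0 else a \<in> matrix_deg d)"

definition graded_word :: "(bool \<times> 'a \<times> int) list \<Rightarrow> bool" where
  "graded_word xs \<longleftrightarrow> (\<forall>(b, a, d) \<in> set xs. graded_letter b a d)"

definition word_val :: "(bool \<times> 'a \<times> int) list \<Rightarrow> 'a" where
  "word_val xs = prod_list (map (\<lambda>(b, a, d). a) xs)"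

definition word_deg :: "(bool \<times> 'a \<times> int) list \<Rightarrow> int" where
  "word_deg xs = sum_list (map (\<lambda>(b, a, d). d) xs)"

definition uncentred_letters :: "(bool \<times> 'a \<times> int) list \<Rightarrow> nat" where
  "uncentred_letters xs = length (filter (\<lambda>(b, a, d). tau a \<noteq> 0) xs)"

lemma graded_word_simps [simp]:
  "graded_word []"
  "graded_word ((b, a, d) # xs) \<longleftrightarrow> graded_letter b a d \<and> graded_word xs"
  "graded_word (xs @ ys) \<longleftrightarrow> graded_word xs \<and> graded_word ys"
  by (simp_all add: graded_word_def ball_Un)

lemma word_val_simps [simp]:
  "word_val [] = 1"
  "word_val ((b, a, d) # xs) = a * word_val xs"
  "word_val (xs @ ys) = word_val xs * word_val ys"
  by (simp_all add: word_val_def)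

lemma word_deg_simps [simp]:
  "word_deg [] = 0"
  "word_deg ((b, a, d) # xs) = d + word_deg xs"
  "word_deg (xs @ ys) = word_deg xs + word_deg ys"
  by (simp_all add: word_deg_def)

lemma uncentred_letters_simps [simp]:
  "uncentred_letters [] = 0"
  "uncentred_letters ((b, a, d) # xs) = (if tau a \<noteq> 0 then Suc (uncentred_letters xs) else uncentred_letters xs)"
  "uncentred_letters (xs @ ys) = uncentred_letters xs + uncentred_letters ys"
  by (simp_all add: uncentred_letters_def)

lemma graded_letter_tau_nonzero:
  assumes "graded_letter b a d" "tau a \<noteq> 0"
  shows "int n dvd d" "graded_letter b (a - scaleC t 1) d"
proof -
  show "int n dvd d"
    using assms matrix_deg_tau_nonzero by (auto simp: graded_letter_def split: if_splits)
  then show "graded_letter b (a - scaleC t 1) d"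
    using assms proj_span_diff_scalar matrix_deg_diff_scalar
    by (auto simp: graded_letter_def split: if_splits)
qed

lemma graded_letter_mult:
  "graded_letter b a d \<Longrightarrow> graded_letter b a' d' \<Longrightarrow> graded_letter b (a * a') (d + d')"
  using proj_span_mult matrix_deg_mult by (auto simp: graded_letter_def split: if_splits)

lemma graded_letter_cstar: "graded_letter b a d \<Longrightarrow> graded_letter b (cstar a) (- d)"
  using cstar_proj_span cstar_matrix_deg by (auto simp: graded_letter_def split: if_splits)

lemma graded_letter_in_free_factor:
  "graded_letter b a d \<Longrightarrow> a \<in> (if b then {\<Sum>j=1..m. scaleC (c j) (p j) | c. True}
                            else {\<Sum>i=1..n. \<Sum>j=1..n. scaleC (c i j) (e i j) | c. True})"
  by (auto simp: graded_letter_def proj_span_def matrix_deg_def mat_comb_def)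

lemma tau_word_val_centre_letter:
  "tau (word_val (ys @ (b, a, d) # zs))
     = tau (word_val (ys @ (b, a - scaleC (tau a) 1, d) # zs)) + tau a * tau (word_val (ys @ zs))"
  by (simp add: left_diff_distrib right_diff_distrib scaleC_mult_left scaleC_mult_right
      tau_diff tau_scaleC)

lemma tau_alternating_centred_word:
  assumes "graded_word xs" "xs \<noteq> []" "\<forall>(b, a, d) \<in> set xs. tau a = 0"
    and alternating: "\<nexists>ys x y zs. xs = ys @ x # y # zs \<and> fst x = fst y"
  shows "tau (word_val xs) = 0"
proof -
  define zs where "zs = map (\<lambda>(b, a, d). (b, a)) xs"
  have "tau (prod_list (map snd zs)) = 0"
  proof (rule free[unfolded free_pair_def, THEN spec, THEN mp, THEN mp, THEN mp])
    show "zs \<noteq> []" using assms(2) by (simp add: zs_def)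
    show "\<forall>(b, a) \<in> set zs. a \<in> (if b then {\<Sum>j=1..m. scaleC (c j) (p j) | c. True}
                            else {\<Sum>i=1..n. \<Sum>j=1..n. scaleC (c i j) (e i j) | c. True}) \<and> tau a = 0"
    proof
      fix z
      assume "z \<in> set zs"
      then obtain b a d where "(b, a, d) \<in> set xs" "z = (b, a)" by (auto simp: zs_def)
      then have "graded_letter b a d" "tau a = 0"
        using assms(1,3) by (auto simp: graded_word_def)
      then show "case z of (b, a) \<Rightarrow> a \<in> (if b then {\<Sum>j=1..m. scaleC (c j) (p j) | c. True}
                            else {\<Sum>i=1..n. \<Sum>j=1..n. scaleC (c i j) (e i j) | c. True}) \<and> tau a = 0"
        unfolding \<open>z = (b, a)\<close> prod.case using graded_letter_in_free_factor by blast
    qed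
    show "\<forall>i. Suc i < length zs \<longrightarrow> fst (zs ! i) \<noteq> fst (zs ! Suc i)"
    proof (intro allI impI)
      fix i
      assume "Suc i < length zs"
      then have i: "Suc i < length xs" by (simp add: zs_def)
      then have "xs = take i xs @ xs ! i # xs ! Suc i # drop (Suc (Suc i)) xs"
        by (metis Cons_nth_drop_Suc Suc_lessD append_take_drop_id)
      then have "fst (xs ! i) \<noteq> fst (xs ! Suc i)" using alternating by blast
      then show "fst (zs ! i) \<noteq> fst (zs ! Suc i)"
        using i by (simp add: zs_def case_prod_beta)
    qed
  qed
  moreover have "prod_list (map snd zs) = word_val xs"
    unfolding zs_def by (induction xs) auto
  ultimately show ?thesis by simp
qed

text \<open>Induction on 2 * length + number of uncentred letters: centre a letter
  (splitting off a shorter word), merge two neighbours from the same factor, or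
  apply freeness to a centred alternating word.\<close>
lemma tau_graded_word:
  assumes "graded_word xs" "\<not> int n dvd word_deg xs"
  shows "tau (word_val xs) = 0"
  using assms
proof (induction xs rule: measure_induct_rule[where f="\<lambda>xs. 2 * length xs + uncentred_letters xs"])
  case (less xs)
  show ?case
  proof (cases "\<exists>x\<in>set xs. tau (fst (snd x)) \<noteq> 0")
    case True
    then obtain ys b a d zs where xs: "xs = ys @ (b, a, d) # zs" and "tau a \<noteq> 0"
      by (metis split_list prod.collapse)
    define a' where "a' = a - scaleC (tau a) 1"
    have "tau a' = 0" by (simp add: a'_def tau_diff tau_scaleC)
    have "graded_letter b a d" "graded_word ys" "graded_word zs"
      using less.prems(1) xs by auto
    then have "int n dvd d" "graded_word (ys @ (b, a', d) # zs)"
      using graded_letter_tau_nonzero[OF _ \<open>tau a \<noteq> 0\<close>] by (auto simp: a'_def)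
    have "\<not> int n dvd word_deg (ys @ zs)"
      using less.prems(2) \<open>int n dvd d\<close> by (simp add: xs dvd_add_right_iff add.left_commute)
    then have "tau (word_val (ys @ zs)) = 0"
      using less.IH[of "ys @ zs"] \<open>graded_word ys\<close> \<open>graded_word zs\<close> by (simp add: xs)
    moreover have "tau (word_val (ys @ (b, a', d) # zs)) = 0"
      using less.IH[OF _ \<open>graded_word (ys @ (b, a', d) # zs)\<close>] less.prems(2)
        \<open>tau a \<noteq> 0\<close> \<open>tau a' = 0\<close> by (simp add: xs)
    ultimately show ?thesis
      using tau_word_val_centre_letter[of ys b a d zs] by (simp add: xs a'_def)
  next
    case centred: False
    show ?thesis
    proof (cases "\<exists>ys x y zs. xs = ys @ x # y # zs \<and> fst x = fst y")
      case True
      then obtain ys b a d b' a' d' zs where "xs = ys @ (b, a, d) # (b', a', d') # zs" "b' = b"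
        by (metis prod.collapse fst_conv)
      then have xs: "xs = ys @ (b, a, d) # (b, a', d') # zs" by simp
      let ?merged = "ys @ (b, a * a', d + d') # zs"
      have "graded_word ?merged" using less.prems(1) xs graded_letter_mult by auto
      moreover have "\<not> int n dvd word_deg ?merged" using less.prems(2) xs by (simp add: algebra_simps)
      ultimately have "tau (word_val ?merged) = 0"
        using less.IH[of ?merged] by (simp add: xs)
      then show ?thesis by (simp add: xs mult.assoc)
    next
      case False
      moreover have "xs \<noteq> []" using less.prems(2) by auto
      moreover have "\<forall>(b, a, d) \<in> set xs. tau a = 0" using centred by auto
      ultimately show ?thesis
        using tau_alternating_centred_word[OF less.prems(1)] by blast
    qed
  qed
qed


section \<open>Graded spans and their closures\<close>

inductive_set graded_span :: "int \<Rightarrow> int \<Rightarrow> 'a set" for q r :: int where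
  graded_span_word: "graded_word xs \<Longrightarrow> q dvd (word_deg xs - r) \<Longrightarrow> word_val xs \<in> graded_span q r"
| graded_span_zero: "0 \<in> graded_span q r"
| graded_span_add: "x \<in> graded_span q r \<Longrightarrow> y \<in> graded_span q r \<Longrightarrow> x + y \<in> graded_span q r"
| graded_span_scaleC: "x \<in> graded_span q r \<Longrightarrow> scaleC c x \<in> graded_span q r"

lemma graded_letter_in_graded_span: "graded_letter b a d \<Longrightarrow> q dvd (d - r) \<Longrightarrow> a \<in> graded_span q r"
  using graded_span_word[of "[(b, a, d)]" q r] by simp

lemma one_in_graded_span: "1 \<in> graded_span q 0"
  using graded_span_word[of "[]" q 0] by simp

lemma graded_span_mod:
  assumes "q dvd (r - r')" "x \<in> graded_span q r"
  shows "x \<in> graded_span q r'"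
  using assms(2)
proof (induction x rule: graded_span.induct)
  case (graded_span_word xs)
  have "q dvd (word_deg xs - r) + (r - r')"
    using graded_span_word.hyps(2) assms(1) by (rule dvd_add)
  then show ?case
    using graded_span_word.hyps(1) by (simp add: graded_span.graded_span_word)
qed (auto intro: graded_span.intros)

lemma graded_span_mult:
  assumes "x \<in> graded_span q r" "y \<in> graded_span q r'"
  shows "x * y \<in> graded_span q (r + r')"
  using assms
proof (induction x rule: graded_span.induct)
  case (graded_span_word xs)
  from graded_span_word.prems show ?case
  proof (induction y rule: graded_span.induct)
    case (graded_span_word ys)
    have "q dvd (word_deg xs - r) + (word_deg ys - r')"
      using \<open>q dvd (word_deg xs - r)\<close> graded_span_word.hyps(2) by (rule dvd_add)
    then have "q dvd word_deg (xs @ ys) - (r + r')" by (simp add: algebra_simps)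
    then show ?case
      using graded_span.graded_span_word[of "xs @ ys"] graded_span_word.hyps(1)
        \<open>graded_word xs\<close> by simp
  qed (simp_all add: distrib_left scaleC_mult_right graded_span.intros)
qed (simp_all add: distrib_right scaleC_mult_left graded_span.intros)

definition adjoint_letter :: "bool \<times> 'a \<times> int \<Rightarrow> bool \<times> 'a \<times> int" where
  "adjoint_letter = (\<lambda>(b, a, d). (b, cstar a, - d))"

lemma cstar_word_val: "cstar (word_val xs) = word_val (rev (map adjoint_letter xs))"
  by (induction xs) (auto simp: adjoint_letter_def cstar_mult)

lemma word_deg_adjoint: "word_deg (rev (map adjoint_letter xs)) = - word_deg xs"
  by (induction xs) (auto simp: adjoint_letter_def)

lemma graded_word_adjoint: "graded_word xs \<Longrightarrow> graded_word (rev (map adjoint_letter xs))"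
  by (induction xs) (auto simp: adjoint_letter_def graded_letter_cstar)

lemma cstar_graded_span:
  assumes "x \<in> graded_span q r"
  shows "cstar x \<in> graded_span q (- r)"
  using assms
proof (induction x rule: graded_span.induct)
  case (graded_span_word xs)
  have "q dvd - (word_deg xs - r)"
    using graded_span_word.hyps(2) by (simp only: dvd_minus_iff)
  then show ?case
    using graded_span.graded_span_word[OF graded_word_adjoint[OF graded_span_word.hyps(1)]]
    by (simp add: cstar_word_val word_deg_adjoint)
qed (simp_all add: cstar_add cstar_scaleC graded_span.intros)

lemma tau_graded_span:
  assumes "q dvd int n" "\<not> q dvd r" "x \<in> graded_span q r"
  shows "tau x = 0"
  using assms(3)
proof (induction x rule: graded_span.induct)
  case (graded_span_word xs)
  have "\<not> int n dvd word_deg xs"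
  proof
    assume "int n dvd word_deg xs"
    then have "q dvd word_deg xs - (word_deg xs - r)"
      using assms(1) graded_span_word.hyps(2) by (meson dvd_diff dvd_trans)
    then show False using assms(2) by simp
  qed
  then show ?case using tau_graded_word graded_span_word.hyps(1) by blast
qed (simp_all add: tau_add tau_scaleC)

lemma closure_graded_span_mult:
  assumes "x \<in> closure (graded_span q r)" "y \<in> closure (graded_span q r')"
  shows "x * y \<in> closure (graded_span q (r + r'))"
  by (rule closure_closed_under_binop[OF _ graded_span_mult assms]) (intro continuous_intros)

lemma cstar_closure_graded_span:
  "x \<in> closure (graded_span q r) \<Longrightarrow> cstar x \<in> closure (graded_span q (- r))"
  by (rule closure_closed_under_unop[OF linear_continuous_on[OF bounded_linear_cstar]])
    (auto intro: cstar_graded_span)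

lemma tau_closure_graded_span:
  "q dvd int n \<Longrightarrow> \<not> q dvd r \<Longrightarrow> x \<in> closure (graded_span q r) \<Longrightarrow> tau x = 0"
  using tau_vanishes_on_closure tau_graded_span by blast

lemma cstar_subalg_closure_graded_span: "cstar_subalg (closure (graded_span q 0))"
proof -
  have add: "x + y \<in> closure (graded_span q 0)"
    if "x \<in> closure (graded_span q 0)" "y \<in> closure (graded_span q 0)" for x y
    by (rule closure_closed_under_binop[OF _ graded_span.graded_span_add that])
      (intro continuous_intros)
  have scale: "scaleC c x \<in> closure (graded_span q 0)" if "x \<in> closure (graded_span q 0)" for c x
    by (rule closure_closed_under_unop[OF continuous_on_scaleC graded_span.graded_span_scaleC that])
  have mult: "x * y \<in> closure (graded_span q 0)"
    if "x \<in> closure (graded_span q 0)" "y \<in> closure (graded_span q 0)" for x y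
    using closure_graded_span_mult[OF that] by simp
  have star: "cstar x \<in> closure (graded_span q 0)" if "x \<in> closure (graded_span q 0)" for x
    using cstar_closure_graded_span[OF that] by simp
  have zero: "0 \<in> closure (graded_span q 0)"
    using closure_subset graded_span.graded_span_zero by blast
  show ?thesis
    unfolding cstar_subalg_def using add scale mult star zero closed_closure by simp
qed

lemma cyc_shift_power_graded: "cyc_shift n e ^ k \<in> graded_span q (- int k)"
proof (induction k)
  case 0
  then show ?case using one_in_graded_span by simp
next
  case (Suc k)
  have "cyc_shift n e \<in> graded_span q (- 1)"
    using cyc_shift_deg by (intro graded_letter_in_graded_span[of False]) (auto simp: graded_letter_def)
  from graded_span_mult[OF this Suc] show ?case by simp
qed

lemma conj_proj_graded:
  assumes "j \<in> {1..m}"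
  shows "cyc_shift n e ^ k * p j * cstar (cyc_shift n e) ^ k \<in> graded_span q 0"
proof -
  have p: "p j \<in> graded_span q 0"
    using proj_in_proj_span[OF assms]
    by (intro graded_letter_in_graded_span[of True]) (auto simp: graded_letter_def)
  have u: "cyc_shift n e ^ k \<in> graded_span q (- int k)"
    by (rule cyc_shift_power_graded)
  have "cstar (cyc_shift n e ^ k) \<in> graded_span q (- (- int k))"
    by (rule cstar_graded_span[OF u])
  from graded_span_mult[OF graded_span_mult[OF u p] this] show ?thesis
    by (simp add: cstar_power)
qed

lemma diag_unit_graded: "i \<in> {1..n} \<Longrightarrow> e i i \<in> graded_span q 0"
  using matrix_unit_deg[of i i] by (intro graded_letter_in_graded_span[of False]) (auto simp: graded_letter_def)

text \<open>Every inner product in the definition of gns_perp is already zero.\<close>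
lemma gns_perp_cyc_shift_powers:
  assumes "Q dvd n" "G \<subseteq> closure (graded_span (int Q) 0)" "k1 < Q" "k2 < Q" "k1 \<noteq> k2"
  shows "gns_perp tau (cyc_shift n e ^ k1) (cstar_gen G) (cyc_shift n e ^ k2) (cstar_gen G)"
  unfolding gns_perp_def
proof (intro allI impI)
  fix X Y :: "nat \<Rightarrow> 'a"
  assume "range X \<subseteq> cstar_gen G" "range Y \<subseteq> cstar_gen G"
  moreover have "cstar_gen G \<subseteq> closure (graded_span (int Q) 0)"
    using assms(2) cstar_subalg_closure_graded_span unfolding cstar_gen_def by blast
  ultimately have X: "X i \<in> closure (graded_span (int Q) 0)"
    and Y: "cstar (Y i) \<in> closure (graded_span (int Q) 0)" for i
    using cstar_closure_graded_span[of "Y i" "int Q" 0] by auto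
  let ?u = "cyc_shift n e"
  have "\<not> int Q dvd int k2 - int k1"
  proof
    assume "int Q dvd int k2 - int k1"
    moreover have "0 < \<bar>int k2 - int k1\<bar>" "\<bar>int k2 - int k1\<bar> < int Q"
      using assms(3-5) by auto
    ultimately show False
      using zdvd_not_zless by (metis dvd_abs_iff)
  qed
  then have "\<not> int Q dvd 0 + (- (- int k2) + (- int k1 + 0))" by simp
  moreover have "cstar (?u ^ k2 * Y i) * (?u ^ k1 * X i)
      \<in> closure (graded_span (int Q) (0 + (- (- int k2) + (- int k1 + 0))))" for i
    unfolding cstar_mult mult.assoc
    by (intro closure_graded_span_mult cstar_closure_graded_span X Y
        closure_subset[THEN subsetD] cyc_shift_power_graded)
  moreover have "int Q dvd int n" using assms(1) by simp
  ultimately have "tau (cstar (?u ^ k2 * Y i) * (?u ^ k1 * X i)) = 0" for i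
    using tau_closure_graded_span by blast
  then show "(\<lambda>i. tau (cstar (?u ^ k2 * Y i) * (?u ^ k1 * X i))) \<longlonglongrightarrow> 0"
    by simp
qed

end

theorem corollary3p3:
  fixes n m :: nat
    and alpha :: "nat \<Rightarrow> real"
    and p :: "nat \<Rightarrow> 'a::cstar_algebra"
    and e :: "nat \<Rightarrow> nat \<Rightarrow> 'a"
    and tau :: "'a \<Rightarrow> complex"
  assumes n2: "n \<ge> 2"
    and alpha_pos: "\<forall>j\<in>{1..m}. alpha j > 0"
    and alpha_mono: "\<forall>j. 1 \<le> j \<and> j < m \<longrightarrow> alpha j \<le> alpha (Suc j)"
    and alpha_sum: "(\<Sum>j=1..m. alpha j) = 1"
    and tau_state: "faithful_tracial_state tau"
    and p_proj: "\<forall>j\<in>{1..m}. p j * p j = p j \<and> cstar (p j) = p j"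
    and p_orth: "\<forall>j\<in>{1..m}. \<forall>k\<in>{1..m}. j \<noteq> k \<longrightarrow> p j * p k = 0"
    and p_sum: "(\<Sum>j=1..m. p j) = 1"
    and e_mult: "\<forall>i\<in>{1..n}. \<forall>j\<in>{1..n}. \<forall>k\<in>{1..n}. \<forall>l\<in>{1..n}.
                   e i j * e k l = (if j = k then e i l else 0)"
    and e_adj: "\<forall>i\<in>{1..n}. \<forall>j\<in>{1..n}. cstar (e i j) = e j i"
    and e_sum: "(\<Sum>i=1..n. e i i) = 1"
    and tau_p: "\<forall>j\<in>{1..m}. tau (p j) = complex_of_real (alpha j)"
    and tau_e: "\<forall>i\<in>{1..n}. \<forall>j\<in>{1..n}. tau (e i j) = (if i = j then 1 / of_nat n else 0)"
    and free: "free_pair tau {\<Sum>j=1..m. scaleC (c j) (p j) | c. True}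
                            {\<Sum>i=1..n. \<Sum>j=1..n. scaleC (c i j) (e i j) | c. True}"
    and generated: "cstar_gen ({p j | j. j \<in> {1..m}} \<union> {e i j | i j. i \<in> {1..n} \<and> j \<in> {1..n}})
                      = UNIV"
  shows
    "(let u = cyc_shift n e;
          B = cstar_gen ({u ^ k * p j * cstar u ^ k | k j. k < n \<and> j \<in> {1..m}}
                         \<union> {e i i | i. i \<in> {1..n}})
      in \<forall>k1 k2. k1 < n \<and> k2 < n \<and> k1 \<noteq> k2 \<longrightarrow> gns_perp tau (u ^ k1) B (u ^ k2) B)
     \<and>
     (\<forall>l. l dvd n \<and> 1 < l \<and> l < n \<longrightarrow>
       (let u = cyc_shift n e;
            E = cstar_gen ({u ^ k * p j * cstar u ^ k | k j. k < l \<and> j \<in> {1..m}}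
                           \<union> {e i i | i. i \<in> {1..n}}
                           \<union> {u ^ (l * t) | t. 1 \<le> t \<and> t < n div l})
        in \<forall>k1 k2. k1 < l \<and> k2 < l \<and> k1 \<noteq> k2 \<longrightarrow> gns_perp tau (u ^ k1) E (u ^ k2) E))"
proof -
  have "free_product_Cm_Mn tau n m p e"
    unfolding free_product_Cm_Mn_def free_product_Cm_Mn_axioms_def
    using faithful_tracial_state_imp_cstar_state[OF tau_state]
      n2 p_proj p_orth p_sum e_mult e_adj e_sum tau_e free
    by auto
  then interpret free_product_Cm_Mn tau n m p e .
  let ?u = "cyc_shift n e"
  have generators: "{?u ^ k * p j * cstar ?u ^ k | k j. k < N \<and> j \<in> {1..m}} \<union> {e i i | i. i \<in> {1..n}}
      \<subseteq> closure (graded_span q 0)" for N q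
    using conj_proj_graded diag_unit_graded closure_subset by blast
  have "?u ^ (l * t) \<in> graded_span (int l) 0" for l t
    by (rule graded_span_mod[OF _ cyc_shift_power_graded]) simp
  then have shift_powers: "?u ^ (l * t) \<in> closure (graded_span (int l) 0)" for l t
    using closure_subset by blast
  show ?thesis
    unfolding Let_def
    apply (intro conjI allI impI)
    subgoal by (rule gns_perp_cyc_shift_powers[of n]) (use generators in auto)
    subgoal for l by (rule gns_perp_cyc_shift_powers[of l]) (use generators shift_powers in auto)
    done
qed

end
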